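(* For every positive integer $n$, the number $A_n=\frac{8(10^{2^n}-1)}{9}$ (whose decimal representation consists of $2^n$ digits all equal to $8$) is a practical number.
   Context: A positive integer $N$ is called a practical number if every integer in $[1,N]$ can be expressed as a sum of distinct positive divisors of $N$. *)

theory Defs
  imports Main
begin

definition practical :: "nat \<Rightarrow> bool" where
  "practical N \<longleftrightarrow> N > 0 \<and>
     (\<forall>m \<in> {1..N}. \<exists>S. S \<subseteq> {d. d dvd N \<and> d > 0} \<and> sum id S = m)"

end

theory Submission
  imports Defs
begin

(* Write A_k = 8 (10^(2^k) - 1) / 9, so that A_(k+1) = A_k (10^(2^k) + 1).  By induction on k,
   every integer up to 10^(2^k) is a sum of distinct divisors of A_k: the base case A_0 = 8 has
   divisors 1, 2, 4, 8, and in the step a number up to (m + 1) x, with m = 10^(2^k) + 1 and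
   x = 10^(2^k), is written as m q + r with q, r <= x; here q and r are sums of divisors of A_k,
   and the divisors in the representation of q are multiplied by m > A_k, which keeps them
   distinct from those used for r.  Since A_k <= 10^(2^k), this makes A_k practical; the argument
   covers k = 0 as well. *)

definition divisor_sums_cover :: "nat \<Rightarrow> nat \<Rightarrow> bool" where
  "divisor_sums_cover N x \<longleftrightarrow>
     (\<forall>k\<le>x. \<exists>S. S \<subseteq> {d. d dvd N \<and> d > 0} \<and> sum id S = k)"

lemma divisor_sums_cover_mono:
  "divisor_sums_cover N x \<Longrightarrow> y \<le> x \<Longrightarrow> divisor_sums_cover N y"
  unfolding divisor_sums_cover_def by auto

lemma practical_if_divisor_sums_cover:
  "N > 0 \<Longrightarrow> divisor_sums_cover N x \<Longrightarrow> N \<le> x \<Longrightarrow> practical N"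
  unfolding divisor_sums_cover_def practical_def by auto

lemma divisor_sums_cover_one: "divisor_sums_cover 1 1"
  unfolding divisor_sums_cover_def
proof (intro allI impI)
  fix k :: nat
  assume "k \<le> 1"
  then consider "k = 0" | "k = 1" by linarith
  then show "\<exists>S. S \<subseteq> {d. d dvd 1 \<and> d > 0} \<and> sum id S = k"
  proof cases
    case 1
    then show ?thesis by (intro exI[of _ "{}"]) simp
  next
    case 2
    then show ?thesis by (intro exI[of _ "{1}"]) simp
  qed
qed

lemma bounded_quotient_remainder:
  fixes k m x :: nat
  assumes "0 < m" "m \<le> x + 1" "k \<le> (m + 1) * x"
  obtains q r where "q \<le> x" "r \<le> x" "k = m * q + r"
proof (cases "k div m \<le> x")
  case True
  have "k mod m < m" using \<open>0 < m\<close> by simp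
  with True show ?thesis
    using that[of "k div m" "k mod m"] \<open>m \<le> x + 1\<close> by simp
next
  case False
  then have "m * x \<le> k"
    by (metis div_le_mono div_mult_self1_is_m le_cases \<open>0 < m\<close> mult.commute)
  then show ?thesis
    using that[of x "k - m * x"] \<open>k \<le> (m + 1) * x\<close> by (simp add: algebra_simps)
qed

lemma divisor_scaled_union:
  fixes N m :: nat
  defines "D n \<equiv> {d. d dvd n \<and> d > 0}"
  assumes "0 < N" "N < m" "S \<subseteq> D N" "T \<subseteq> D N"
  shows "(*) m ` S \<union> T \<subseteq> D (N * m)"
    and "sum id ((*) m ` S \<union> T) = m * sum id S + sum id T"
proof -
  show "(*) m ` S \<union> T \<subseteq> D (N * m)"
    using assms by (auto simp: D_def mult.commute mult_dvd_mono)
  have "finite (D N)"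
    unfolding D_def using \<open>0 < N\<close> by simp
  then have "finite S" "finite T"
    using assms(4,5) finite_subset by blast+
  have "m * d \<notin> T" if "d \<in> S" for d
  proof
    assume "m * d \<in> T"
    then have "m * d \<le> N"
      using assms(2,5) by (auto simp: D_def intro: dvd_imp_le)
    moreover have "0 < d"
      using that assms(4) by (auto simp: D_def)
    then have "m \<le> m * d" by simp
    ultimately show False using \<open>N < m\<close> by simp
  qed
  then have "(*) m ` S \<inter> T = {}" by blast
  moreover have "inj_on ((*) m) S"
    using \<open>N < m\<close> by (auto simp: inj_on_def)
  ultimately show "sum id ((*) m ` S \<union> T) = m * sum id S + sum id T"
    using \<open>finite S\<close> \<open>finite T\<close>
    by (simp add: sum.union_disjoint sum.reindex sum_distrib_left)
qed

lemma divisor_sums_cover_mult: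
  assumes "0 < N" "divisor_sums_cover N x" "N < m" "m \<le> x + 1"
  shows "divisor_sums_cover (N * m) ((m + 1) * x)"
  unfolding divisor_sums_cover_def
proof (intro allI impI)
  fix k
  assume "k \<le> (m + 1) * x"
  moreover have "0 < m" using \<open>N < m\<close> by simp
  ultimately obtain q r where "q \<le> x" "r \<le> x" "k = m * q + r"
    using bounded_quotient_remainder \<open>m \<le> x + 1\<close> by metis
  with assms(2) obtain S T where
    S: "S \<subseteq> {d. d dvd N \<and> d > 0}" "sum id S = q" and
    T: "T \<subseteq> {d. d dvd N \<and> d > 0}" "sum id T = r"
    unfolding divisor_sums_cover_def by meson
  show "\<exists>U. U \<subseteq> {d. d dvd N * m \<and> d > 0} \<and> sum id U = k"
    using divisor_scaled_union[OF \<open>0 < N\<close> \<open>N < m\<close> S(1) T(1)] S(2) T(2) \<open>k = m * q + r\<close>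
    by blast
qed

lemma divisor_sums_cover_eight: "divisor_sums_cover 8 15"
proof -
  have "divisor_sums_cover 2 3"
    using divisor_sums_cover_mult[OF _ divisor_sums_cover_one, of 2] by simp
  then show ?thesis
    using divisor_sums_cover_mult[of 2 3 4] by simp
qed

lemma nine_dvd_ten_pow_minus_one: "9 dvd (10::nat) ^ j - 1"
proof -
  have "(10::nat) ^ j mod 9 = 1 mod 9"
    using power_mod[of "10::nat" 9 j] by simp
  then show ?thesis
    using mod_eq_dvd_iff_nat[of 1 "10 ^ j" 9] by simp
qed

lemma ten_pow_two_pow_Suc: "(10::nat) ^ 2 ^ Suc k = 10 ^ 2 ^ k * 10 ^ 2 ^ k"
  by (metis mult_2 power_Suc power_add)

lemma repeated_eights_Suc:
  "8 * (10 ^ 2 ^ Suc k - 1) div 9 = (8 * (10 ^ 2 ^ k - 1) div 9) * (10 ^ 2 ^ k + 1 :: nat)"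
proof -
  define x :: nat where "x = 10 ^ 2 ^ k"
  obtain t where t: "x - 1 = 9 * t"
    using nine_dvd_ten_pow_minus_one unfolding x_def by blast
  have "(10::nat) ^ 2 ^ Suc k = x * x"
    unfolding x_def by (rule ten_pow_two_pow_Suc)
  moreover have "x * x - 1 = (x - 1) * (x + 1)"
    by (simp add: algebra_simps)
  ultimately show ?thesis
    using t by (simp flip: x_def)
qed

lemma repeated_eights_bounds:
  "0 < 8 * ((10::nat) ^ 2 ^ k - 1) div 9" "8 * ((10::nat) ^ 2 ^ k - 1) div 9 \<le> 10 ^ 2 ^ k"
proof -
  obtain t where t: "(10::nat) ^ 2 ^ k - 1 = 9 * t"
    using nine_dvd_ten_pow_minus_one by blast
  have "1 < (10::nat) ^ 2 ^ k"
    using one_less_power[of "10::nat" "2 ^ k"] by simp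
  with t show "0 < 8 * ((10::nat) ^ 2 ^ k - 1) div 9" by simp
  have "8 * (10 ^ 2 ^ k - 1) div 9 \<le> 9 * (10::nat) ^ 2 ^ k div 9"
    by (intro div_le_mono) simp
  then show "8 * ((10::nat) ^ 2 ^ k - 1) div 9 \<le> 10 ^ 2 ^ k" by simp
qed

lemma divisor_sums_cover_repeated_eights:
  "divisor_sums_cover (8 * (10 ^ 2 ^ k - 1) div 9) (10 ^ 2 ^ k)"
proof (induction k)
  case 0
  then show ?case
    using divisor_sums_cover_mono[OF divisor_sums_cover_eight] by simp
next
  case (Suc k)
  define x :: nat where "x = 10 ^ 2 ^ k"
  define N where "N = 8 * (x - 1) div 9"
  have "0 < N" "N < x + 1"
    using repeated_eights_bounds[of k] by (simp_all add: N_def x_def)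
  then have "divisor_sums_cover (N * (x + 1)) ((x + 2) * x)"
    using divisor_sums_cover_mult[of N x "x + 1"] Suc.IH by (simp add: N_def x_def)
  moreover have "(10::nat) ^ 2 ^ Suc k \<le> (x + 2) * x"
    unfolding ten_pow_two_pow_Suc x_def by simp
  moreover have "8 * (10 ^ 2 ^ Suc k - 1) div 9 = N * (x + 1)"
    unfolding repeated_eights_Suc N_def x_def ..
  ultimately show ?case
    by (metis divisor_sums_cover_mono)
qed

theorem mainTheorem9:
  fixes n :: nat
  assumes "n \<ge> 1"
  shows "practical (8 * (10 ^ (2 ^ n) - 1) div 9)"
  using practical_if_divisor_sums_cover[OF repeated_eights_bounds(1)
      divisor_sums_cover_repeated_eights repeated_eights_bounds(2)] .

end
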